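(* For all integers $m,n\ge1$ and every $c>\frac{m!\,n!}{m^m n^n}$ one has $\operatorname{D}^\times_{m,n}(c\psi_1)=\mathbb R^{m\times n}$.
   Context: For $Y\in\mathbb R^{m\times n}$ let $Y_1,\dots,Y_m$ be its rows. For $\boldsymbol x\in\mathbb R^n$ put $\Pi_+(\boldsymbol x):=\prod_{i=1}^n\max\{1,|x_i|\}$. For $\psi:[1,\infty)\to(0,\infty)$ and $T>1$ let $\mathcal S^\times_{m,n}(\psi,T)$ be the set of $Y\in\mathbb R^{m\times n}$ for which there exist $\boldsymbol p\in\mathbb Z^m$, $\boldsymbol q\in\mathbb Z^n\setminus\{\boldsymbol 0\}$ with $\prod_{i=1}^m|Y_i\boldsymbol q-p_i|<\psi(T)$ and $\Pi_+(\boldsymbol q)<T$. Put $\operatorname{D}^\times_{m,n}(\psi):=\bigcup_{T_0>1}\bigcap_{T\ge T_0}\mathcal S^\times_{m,n}(\psi,T)$, and $\psi_1(x):=1/x$. *)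

theory Defs
  imports "HOL-Analysis.Analysis"
begin

definition Pi_plus :: "real^'n \<Rightarrow> real" where
  "Pi_plus x = (\<Prod>i\<in>UNIV. max 1 \<bar>x $ i\<bar>)"

text \<open>S^x_{m,n}(psi,T); matrices Y in R^{m x n} are real^'n^'m, row i is Y $ i.\<close>
definition S_mult :: "(real \<Rightarrow> real) \<Rightarrow> real \<Rightarrow> (real^'n^'m) set" where
  "S_mult \<psi> T = {Y. \<exists>(p::int^'m) (q::int^'n). q \<noteq> 0 \<and>
      (\<Prod>i\<in>UNIV. \<bar>(\<Sum>j\<in>UNIV. Y $ i $ j * of_int (q $ j)) - of_int (p $ i)\<bar>) < \<psi> T \<and>
      Pi_plus (\<chi> j. of_int (q $ j)) < T}"

definition D_mult :: "(real \<Rightarrow> real) \<Rightarrow> (real^'n^'m) set" where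
  "D_mult \<psi> = (\<Union>T0\<in>{1<..}. \<Inter>T\<in>{T0..}. S_mult \<psi> T)"

definition psi1 :: "real \<Rightarrow> real" where
  "psi1 x = 1 / x"

end

theory Submission
  imports Defs
begin

text \<open>
  Choose K < \<rho> < c, where K = m! n! / (m^m n^n), and \<gamma> < 1 with \<gamma>^n \<rho> > K.
  For large T, the set of (u, v) with |u|_1 \<le> r/2 and |v - Y u|_1 \<le> s/2, where
  r = n \<gamma> T^(1/n) and (s/m)^m = \<rho>/T, has volume r^n s^m / (n! m!) > 1, since
  the l1-ball of radius t in dimension d has volume (2t)^d/d! and shearing preserves volume.
  Blichfeldt's principle gives two points with integral difference (q, p), q \<noteq> 0 because s < 1.
  By AM-GM, the product of the |Y_i q - p_i| is at most (s/m)^m = \<rho>/T < c/T, and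
  \<Pi>_+(q) \<le> (1 + |q|_1/n)^n \<le> (1 + \<gamma> T^(1/n))^n < T.
\<close>

lemma prod_le_mean_power:
  fixes x :: "'a \<Rightarrow> real"
  assumes "finite S" "S \<noteq> {}" "\<And>i. i \<in> S \<Longrightarrow> x i \<ge> 0"
  shows "(\<Prod>i\<in>S. x i) \<le> ((\<Sum>i\<in>S. x i) / card S) ^ card S"
proof -
  have "card S > 0" using assms by (simp add: card_gt_0_iff)
  have "(\<Prod>i\<in>S. x i) = ((\<Prod>i\<in>S. x i) powr (1 / card S)) ^ card S"
  proof (cases "(\<Prod>i\<in>S. x i) = 0")
    case False
    then show ?thesis
      using \<open>card S > 0\<close> assms(3) by (simp add: powr_power prod_nonneg)
  qed (use \<open>card S > 0\<close> in simp)
  also have "\<dots> \<le> ((\<Sum>i\<in>S. x i) / card S) ^ card S"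
    using arith_geom_mean[OF assms] by (intro power_mono) (simp_all add: sum_divide_distrib)
  finally show ?thesis .
qed

lemma nn_integral_tent_power:
  fixes t :: real
  assumes "t \<ge> 0"
  shows "(\<integral>\<^sup>+y. ennreal ((2 * (t - \<bar>y\<bar>)) ^ n / fact n) * indicator {-t..t} y \<partial>lborel)
    = ennreal ((2 * t) ^ Suc n / fact (Suc n))"
proof -
  define c where "c = (2 * t) ^ Suc n / (2 * fact (Suc n))"
  have left: "(\<integral>\<^sup>+y. ennreal ((2 * (t + y)) ^ n / fact n) * indicator {-t..0} y \<partial>lborel) = c"
  proof -
    have "((\<lambda>y. (2 * (t + y)) ^ Suc n / (2 * fact (Suc n))) has_real_derivative
            (2 * (t + y)) ^ n / fact n) (at y)" for y
      by (rule derivative_eq_intros refl | simp)+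
    then show ?thesis using assms by (subst nn_integral_FTC_Icc) (auto simp: c_def)
  qed
  have right: "(\<integral>\<^sup>+y. ennreal ((2 * (t - y)) ^ n / fact n) * indicator {0..t} y \<partial>lborel) = c"
  proof -
    have "((\<lambda>y. - ((2 * (t - y)) ^ Suc n / (2 * fact (Suc n)))) has_real_derivative
            (2 * (t - y)) ^ n / fact n) (at y)" for y
      by (rule derivative_eq_intros refl | simp)+
    then show ?thesis using assms by (subst nn_integral_FTC_Icc) (auto simp: c_def)
  qed
  have "(\<integral>\<^sup>+y. ennreal ((2 * (t - \<bar>y\<bar>)) ^ n / fact n) * indicator {-t..t} y \<partial>lborel)
      = (\<integral>\<^sup>+y. ennreal ((2 * (t + y)) ^ n / fact n) * indicator {-t..0} y
               + ennreal ((2 * (t - y)) ^ n / fact n) * indicator {0..t} y \<partial>lborel)"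
    by (intro nn_integral_cong_AE eventually_mono[OF AE_lborel_singleton[of 0]])
       (auto simp: indicator_def)
  also have "\<dots> = ennreal c + ennreal c"
    by (subst nn_integral_add) (simp_all only: left right, measurable)
  also have "\<dots> = ennreal ((2 * t) ^ Suc n / fact (Suc n))"
    using assms by (simp del: fact_Suc add: c_def ennreal_plus[symmetric] field_simps)
  finally show ?thesis .
qed

lemma l1_ball_fun_upd_iff:
  fixes x :: "'a \<Rightarrow> real"
  assumes "b \<notin> A" "finite A"
  shows "(\<Sum>i\<in>insert b A. \<bar>(x(b := y)) i\<bar>) \<le> t \<longleftrightarrow> \<bar>y\<bar> \<le> t \<and> (\<Sum>i\<in>A. \<bar>x i\<bar>) \<le> t - \<bar>y\<bar>"
proof -
  have "(\<Sum>i\<in>A. \<bar>(x(b := y)) i\<bar>) = (\<Sum>i\<in>A. \<bar>x i\<bar>)"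
    using assms by (intro sum.cong) auto
  then have "(\<Sum>i\<in>insert b A. \<bar>(x(b := y)) i\<bar>) = \<bar>y\<bar> + (\<Sum>i\<in>A. \<bar>x i\<bar>)"
    using assms by simp
  moreover have "0 \<le> (\<Sum>i\<in>A. \<bar>x i\<bar>)"
    by (simp add: sum_nonneg)
  ultimately show ?thesis
    by arith
qed

lemma emeasure_PiM_l1_ball:
  fixes t :: real
  assumes "finite A" "t \<ge> 0"
  shows "emeasure (Pi\<^sub>M A (\<lambda>_. lborel)) ({x. (\<Sum>i\<in>A. \<bar>x i\<bar>) \<le> t} \<inter> space (Pi\<^sub>M A (\<lambda>_. lborel)))
    = ennreal ((2 * t) ^ card A / fact (card A))"
  using assms
proof (induction arbitrary: t rule: finite_induct)
  case (empty t)
  then show ?case by (simp add: PiM_empty)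
next
  case (insert b A t)
  let ?M = "\<lambda>A. Pi\<^sub>M A (\<lambda>_. lborel :: real measure)"
  let ?B = "\<lambda>A t. {x. (\<Sum>i\<in>A. \<bar>x i\<bar>) \<le> t} \<inter> space (?M A)"
  have [measurable]: "?B A t \<in> sets (?M A)" if "finite A" for A t
  proof -
    have "?B A t = (\<lambda>x. \<Sum>i\<in>A. \<bar>x i\<bar>) -` {..t} \<inter> space (?M A)"
      by auto
    also have "\<dots> \<in> sets (?M A)"
      using that by measurable
    finally show ?thesis .
  qed
  interpret product_sigma_finite "\<lambda>_. lborel"
    by standard
  have "emeasure (?M (insert b A)) (?B (insert b A) t)
      = (\<integral>\<^sup>+y. \<integral>\<^sup>+x. indicator (?B (insert b A) t) (x(b := y)) \<partial>?M A \<partial>lborel)"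
    using insert.hyps
    by (subst nn_integral_indicator[symmetric], simp)
       (intro product_nn_integral_insert_rev; simp)
  also have "\<dots> = (\<integral>\<^sup>+y. \<integral>\<^sup>+x. indicator {-t..t} y * indicator (?B A (t - \<bar>y\<bar>)) x \<partial>?M A \<partial>lborel)"
    using insert.hyps l1_ball_fun_upd_iff[of b A]
    by (intro nn_integral_cong)
       (auto simp: indicator_def space_PiM PiE_def extensional_def abs_le_iff)
  also have "\<dots> = (\<integral>\<^sup>+y. indicator {-t..t} y * emeasure (?M A) (?B A (t - \<bar>y\<bar>)) \<partial>lborel)"
    using insert.hyps by (subst nn_integral_cmult) (auto simp: nn_integral_indicator)
  also have "\<dots> = (\<integral>\<^sup>+y. ennreal ((2 * (t - \<bar>y\<bar>)) ^ card A / fact (card A)) * indicator {-t..t} y \<partial>lborel)"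
  proof (intro nn_integral_cong)
    fix y :: real
    show "indicator {-t..t} y * emeasure (?M A) (?B A (t - \<bar>y\<bar>))
        = ennreal ((2 * (t - \<bar>y\<bar>)) ^ card A / fact (card A)) * indicator {-t..t} y"
      using insert.IH[of "t - \<bar>y\<bar>"] by (auto simp: indicator_def)
  qed
  also have "\<dots> = ennreal ((2 * t) ^ card (insert b A) / fact (card (insert b A)))"
    using insert.hyps insert.prems nn_integral_tent_power[of t "card A"] by simp
  finally show ?case .
qed

lemma emeasure_lborel_l1_ball:
  fixes t :: real
  assumes "t \<ge> 0"
  shows "emeasure lborel {x::'a::euclidean_space. (\<Sum>b\<in>Basis. \<bar>x \<bullet> b\<bar>) \<le> t}
    = ennreal ((2 * t) ^ DIM('a) / fact DIM('a))"
proof -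
  have "(\<lambda>f. \<Sum>b\<in>Basis. f b *\<^sub>R b) -` {x::'a. (\<Sum>b\<in>Basis. \<bar>x \<bullet> b\<bar>) \<le> t}
      = {y. (\<Sum>b\<in>Basis. \<bar>y b\<bar>) \<le> t}"
    by (auto cong: sum.cong)
  then have "emeasure lborel {x::'a. (\<Sum>b\<in>Basis. \<bar>x \<bullet> b\<bar>) \<le> t}
      = emeasure (Pi\<^sub>M (Basis :: 'a set) (\<lambda>b. lborel))
          ({y. (\<Sum>b\<in>Basis. \<bar>y b\<bar>) \<le> t} \<inter> space (Pi\<^sub>M Basis (\<lambda>b. lborel)))"
    by (subst lborel_eq) (simp add: emeasure_distr)
  also have "\<dots> = ennreal ((2 * t) ^ DIM('a) / fact DIM('a))"
    using assms by (simp add: emeasure_PiM_l1_ball)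
  finally show ?thesis .
qed

lemma emeasure_lborel_l1_ball_vec:
  fixes t :: real
  assumes "t \<ge> 0"
  shows "emeasure lborel {x::real^'n. (\<Sum>j\<in>UNIV. \<bar>x $ j\<bar>) \<le> t}
    = ennreal ((2 * t) ^ CARD('n) / fact CARD('n))"
proof -
  have "(\<Sum>b\<in>Basis. \<bar>x \<bullet> b\<bar>) = (\<Sum>j\<in>UNIV. \<bar>x $ j\<bar>)" for x :: "real^'n"
  proof -
    have Basis: "Basis = (\<lambda>j. axis j (1::real)) ` UNIV"
      by (auto simp: Basis_vec_def)
    have "inj (\<lambda>j. axis j (1::real) :: real^'n)"
      by (auto simp: inj_def axis_eq_axis)
    then show ?thesis
      by (simp only: Basis sum.reindex o_def) (simp add: inner_axis)
  qed
  then show ?thesis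
    using emeasure_lborel_l1_ball[OF assms, where 'a="real^'n"] by simp
qed

lemma emeasure_lborel_translate:
  fixes a :: "'a::euclidean_space"
  assumes "A \<in> sets borel"
  shows "emeasure lborel {x. x - a \<in> A} = emeasure lborel A"
proof -
  have "emeasure lborel A = emeasure (distr lborel borel ((+) (- a))) A"
    by (simp add: lborel_distr_plus)
  also have "\<dots> = emeasure lborel {x. x - a \<in> A}"
    using assms by (subst emeasure_distr) (auto simp: vimage_def)
  finally show ?thesis ..
qed

lemma sets_lborel_shear:
  fixes L :: "'a::euclidean_space \<Rightarrow> 'b::euclidean_space"
  assumes [measurable]: "A \<in> sets borel" "C \<in> sets borel" "L \<in> borel_measurable borel"
  shows "{x. fst x \<in> A \<and> snd x - L (fst x) \<in> C} \<in> sets (lborel \<Otimes>\<^sub>M lborel)"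
proof -
  have "{x \<in> space (lborel \<Otimes>\<^sub>M lborel). fst x \<in> A \<and> snd x - L (fst x) \<in> C}
      \<in> sets (lborel \<Otimes>\<^sub>M lborel)"
    by measurable
  then show ?thesis
    by (simp add: space_pair_measure)
qed

lemma emeasure_lborel_shear:
  fixes L :: "'a::euclidean_space \<Rightarrow> 'b::euclidean_space"
  assumes [measurable]: "A \<in> sets borel" "C \<in> sets borel" "L \<in> borel_measurable borel"
  shows "emeasure lborel {x. fst x \<in> A \<and> snd x - L (fst x) \<in> C}
    = emeasure lborel A * emeasure lborel C"
proof -
  let ?S = "{x. fst x \<in> A \<and> snd x - L (fst x) \<in> C}"
  have [measurable]: "?S \<in> sets (lborel \<Otimes>\<^sub>M lborel)"
    by (rule sets_lborel_shear) simp_all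
  have fibre: "emeasure lborel (Pair u -` ?S) = emeasure lborel C * indicator A u" for u
  proof (cases "u \<in> A")
    case True
    then have "Pair u -` ?S = {v. v - L u \<in> C}"
      by auto
    then show ?thesis
      using True assms(2) by (simp add: emeasure_lborel_translate)
  qed simp
  have "emeasure lborel ?S = emeasure (lborel \<Otimes>\<^sub>M lborel) ?S"
    by (simp add: lborel_prod)
  also have "\<dots> = (\<integral>\<^sup>+u. emeasure lborel (Pair u -` ?S) \<partial>lborel)"
    by (rule lborel.emeasure_pair_measure_alt) measurable
  also have "\<dots> = emeasure lborel A * emeasure lborel C"
    unfolding fibre by (subst nn_integral_cmult_indicator) (simp_all add: mult.commute)
  finally show ?thesis .
qed

lemma diff_in_unit_cell_iff_eq_floor:
  fixes x k :: "'a::euclidean_space"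
  assumes "\<forall>b\<in>Basis. k \<bullet> b \<in> \<int>"
  shows "(\<forall>b\<in>Basis. (x - k) \<bullet> b \<in> {0..<1}) \<longleftrightarrow> k = (\<Sum>b\<in>Basis. of_int \<lfloor>x \<bullet> b\<rfloor> *\<^sub>R b)"
proof -
  have "(x - k) \<bullet> b \<in> {0..<1} \<longleftrightarrow> k \<bullet> b = of_int \<lfloor>x \<bullet> b\<rfloor>" if "b \<in> Basis" for b
  proof -
    have "k \<bullet> b \<in> \<int>"
      using assms that by blast
    then obtain z where "k \<bullet> b = of_int z"
      by (rule Ints_cases)
    then show ?thesis
      by (auto simp: inner_diff_left floor_eq_iff eq_commute[of z])
  qed
  then show ?thesis
    by (auto simp: euclidean_eq_iff[where 'a='a])
qed

lemma countable_integer_points: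
  "countable {k::'a::euclidean_space. \<forall>b\<in>Basis. k \<bullet> b \<in> \<int>}"
proof (rule countable_subset)
  show "{k::'a. \<forall>b\<in>Basis. k \<bullet> b \<in> \<int>}
      \<subseteq> (\<lambda>f. \<Sum>b\<in>Basis. of_int (f b) *\<^sub>R b) ` (Basis \<rightarrow>\<^sub>E UNIV)"
  proof
    fix k :: 'a assume "k \<in> {k. \<forall>b\<in>Basis. k \<bullet> b \<in> \<int>}"
    then have "k = (\<Sum>b\<in>Basis. of_int \<lfloor>k \<bullet> b\<rfloor> *\<^sub>R b)"
      using diff_in_unit_cell_iff_eq_floor[of k k] by simp
    then show "k \<in> (\<lambda>f. \<Sum>b\<in>Basis. of_int (f b) *\<^sub>R b) ` (Basis \<rightarrow>\<^sub>E UNIV)"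
      by (intro image_eqI[where x="restrict (\<lambda>b. \<lfloor>k \<bullet> b\<rfloor>) Basis"]) (auto cong: sum.cong)
  qed
qed (intro countable_image countable_PiE; simp)

lemma blichfeldt:
  fixes S :: "'a::euclidean_space set"
  assumes [measurable]: "S \<in> sets lborel" and "emeasure lborel S > 1"
  shows "\<exists>x\<in>S. \<exists>y\<in>S. x \<noteq> y \<and> (\<forall>b\<in>Basis. (x - y) \<bullet> b \<in> \<int>)"
proof (rule ccontr)
  assume no_pair: "\<not> ?thesis"
  \<comment> \<open>Cut S along the integer translates of the unit cell U and move the pieces X k back into U.
    The translates V k are pairwise disjoint, so their total measure, that of S, is at most 1.\<close>
  define Z where "Z = {k::'a. \<forall>b\<in>Basis. k \<bullet> b \<in> \<int>}"
  define U where "U = {z::'a. \<forall>b\<in>Basis. z \<bullet> b \<in> {0..<1}}"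
  define X where "X k = {x\<in>S. x - k \<in> U}" for k
  define V where "V k = {z\<in>U. z + k \<in> S}" for k
  have "countable Z"
    unfolding Z_def by (rule countable_integer_points)
  have [measurable]: "U \<in> sets borel" "X k \<in> sets borel" and V_borel[measurable]: "V k \<in> sets borel"
    for k
    unfolding U_def X_def V_def by measurable
  have "X k = {x. x - k \<in> V k}" for k
    by (auto simp: X_def V_def)
  then have measure_X: "emeasure lborel (X k) = emeasure lborel (V k)" for k
    by (simp add: emeasure_lborel_translate V_borel)
  have "(\<Sum>b\<in>Basis. of_int \<lfloor>x \<bullet> b\<rfloor> *\<^sub>R b) \<in> Z \<and> x - (\<Sum>b\<in>Basis. of_int \<lfloor>x \<bullet> b\<rfloor> *\<^sub>R b) \<in> U"
    for x
    using diff_in_unit_cell_iff_eq_floor[of "\<Sum>b\<in>Basis. of_int \<lfloor>x \<bullet> b\<rfloor> *\<^sub>R b" x]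
    by (simp add: Z_def U_def)
  then have S_eq: "S = (\<Union>k\<in>Z. X k)"
    unfolding X_def by blast
  have "disjoint_family_on X Z"
    unfolding disjoint_family_on_def
  proof (intro ballI impI)
    fix k l assume "k \<in> Z" "l \<in> Z" "k \<noteq> l"
    then show "X k \<inter> X l = {}"
      using diff_in_unit_cell_iff_eq_floor[of k] diff_in_unit_cell_iff_eq_floor[of l]
      by (auto simp: X_def U_def Z_def)
  qed
  then have "emeasure lborel S = (\<integral>\<^sup>+k. emeasure lborel (V k) \<partial>count_space Z)"
    using \<open>countable Z\<close> unfolding S_eq by (subst emeasure_UN_countable) (auto simp: measure_X)
  also have "\<dots> = emeasure lborel (\<Union>k\<in>Z. V k)"
  proof (rule emeasure_UN_countable[symmetric])
    show "disjoint_family_on V Z"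
      unfolding disjoint_family_on_def
    proof (intro ballI impI)
      fix k l assume "k \<in> Z" "l \<in> Z" "k \<noteq> l"
      then have "\<forall>b\<in>Basis. ((z + k) - (z + l)) \<bullet> b \<in> \<int>" "z + k \<noteq> z + l" for z
        by (simp_all add: Z_def inner_diff_left)
      then have "z + k \<notin> S \<or> z + l \<notin> S" for z
        using no_pair by blast
      then show "V k \<inter> V l = {}"
        by (auto simp: V_def)
    qed
  qed (use \<open>countable Z\<close> in auto)
  also have "\<dots> \<le> emeasure lborel (cbox 0 (One :: 'a))"
    by (intro emeasure_mono) (auto simp: V_def U_def mem_box less_imp_le)
  also have "\<dots> = 1"
    by (simp add: emeasure_lborel_cbox_eq inner_Basis)
  finally show False
    using assms(2) by simp
qed

lemma sum_abs_diff_le: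
  fixes u v :: "real^'n"
  shows "(\<Sum>j\<in>UNIV. \<bar>(u - v) $ j\<bar>) \<le> (\<Sum>j\<in>UNIV. \<bar>u $ j\<bar>) + (\<Sum>j\<in>UNIV. \<bar>v $ j\<bar>)"
  unfolding sum.distrib[symmetric] by (intro sum_mono) (simp add: abs_triangle_ineq4)

lemma exists_lattice_point_l1_approximation:
  fixes Y :: "real^'n::finite^'m::finite" and r s :: real
  assumes "r \<ge> 0" "s \<ge> 0" "fact CARD('n) * fact CARD('m) < r ^ CARD('n) * s ^ CARD('m)"
  shows "\<exists>(q::real^'n) (p::real^'m). (q, p) \<noteq> 0 \<and> (\<forall>j. q $ j \<in> \<int>) \<and> (\<forall>i. p $ i \<in> \<int>) \<and>
    (\<Sum>j\<in>UNIV. \<bar>q $ j\<bar>) \<le> r \<and> (\<Sum>i\<in>UNIV. \<bar>(Y *v q) $ i - p $ i\<bar>) \<le> s"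
proof -
  \<comment> \<open>Halved radii, so that the difference of two points of S satisfies the full bounds.\<close>
  define A where "A = {u::real^'n. (\<Sum>j\<in>UNIV. \<bar>u $ j\<bar>) \<le> r / 2}"
  define C where "C = {v::real^'m. (\<Sum>i\<in>UNIV. \<bar>v $ i\<bar>) \<le> s / 2}"
  define S where "S = {x. fst x \<in> A \<and> snd x - Y *v fst x \<in> C}"
  have [measurable]: "A \<in> sets borel" "C \<in> sets borel"
    unfolding A_def C_def by measurable
  have [measurable]: "(*v) Y \<in> borel_measurable borel"
    by (intro borel_measurable_continuous_onI linear_continuous_on matrix_vector_mul_bounded_linear)
  have "S \<in> sets (lborel \<Otimes>\<^sub>M lborel)"
    unfolding S_def by (rule sets_lborel_shear) simp_all
  then have "S \<in> sets lborel"
    by (simp only: lborel_prod)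
  have "emeasure lborel S = emeasure lborel A * emeasure lborel C"
    unfolding S_def by (intro emeasure_lborel_shear) simp_all
  also have "\<dots> = ennreal (r ^ CARD('n) / fact CARD('n) * (s ^ CARD('m) / fact CARD('m)))"
    using emeasure_lborel_l1_ball_vec[of "r / 2", where 'n='n]
      emeasure_lborel_l1_ball_vec[of "s / 2", where 'n='m] assms
    by (simp add: A_def C_def flip: ennreal_mult)
  finally have "emeasure lborel S > 1"
    using assms(3) by (simp add: field_simps)
  then obtain x y where "x \<in> S" "y \<in> S" "x \<noteq> y" and int: "\<forall>b\<in>Basis. (x - y) \<bullet> b \<in> \<int>"
    using blichfeldt[OF \<open>S \<in> sets lborel\<close>] by blast
  define q where "q = fst x - fst y"
  define p where "p = snd x - snd y"
  have "(q, p) \<noteq> 0"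
    using \<open>x \<noteq> y\<close> by (simp add: q_def p_def prod_eq_iff)
  moreover have "q $ j \<in> \<int>" for j
    using int[rule_format, of "(axis j 1, 0)"] by (simp add: q_def Basis_prod_def inner_prod_def inner_axis)
  moreover have "p $ i \<in> \<int>" for i
    using int[rule_format, of "(0, axis i 1)"] by (simp add: p_def Basis_prod_def inner_prod_def inner_axis)
  moreover have "(\<Sum>j\<in>UNIV. \<bar>q $ j\<bar>) \<le> r"
    using sum_abs_diff_le[of "fst x" "fst y"] \<open>x \<in> S\<close> \<open>y \<in> S\<close> by (simp add: q_def S_def A_def)
  moreover have "(\<Sum>i\<in>UNIV. \<bar>(Y *v q) $ i - p $ i\<bar>) \<le> s"
  proof -
    have "(Y *v q) - p = (snd y - Y *v fst y) - (snd x - Y *v fst x)"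
      by (simp add: q_def p_def matrix_vector_mult_diff_distrib)
    then show ?thesis
      using sum_abs_diff_le[of "snd y - Y *v fst y" "snd x - Y *v fst x"] \<open>x \<in> S\<close> \<open>y \<in> S\<close>
      by (simp add: S_def C_def vec_eq_iff)
  qed
  ultimately show ?thesis
    by blast
qed

lemma exists_integer_l1_approximation:
  fixes Y :: "real^'n::finite^'m::finite" and r s :: real
  assumes "r \<ge> 0" "s \<ge> 0" "s < 1" "fact CARD('n) * fact CARD('m) < r ^ CARD('n) * s ^ CARD('m)"
  shows "\<exists>(q::int^'n) (p::int^'m). q \<noteq> 0 \<and> (\<Sum>j\<in>UNIV. \<bar>of_int (q $ j)\<bar>) \<le> r \<and>
    (\<Sum>i\<in>UNIV. \<bar>(Y *v (\<chi> j. of_int (q $ j))) $ i - of_int (p $ i)\<bar>) \<le> s"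
proof -
  obtain q p where "(q, p) \<noteq> 0" and q_int: "\<forall>j. q $ j \<in> \<int>" and p_int: "\<forall>i. p $ i \<in> \<int>"
    and q_le: "(\<Sum>j\<in>UNIV. \<bar>q $ j\<bar>) \<le> r" and qp_le: "(\<Sum>i\<in>UNIV. \<bar>(Y *v q) $ i - p $ i\<bar>) \<le> s"
    using exists_lattice_point_l1_approximation[OF assms(1,2,4)] by blast
  have "q \<noteq> 0"
  proof
    assume "q = 0"
    have "p $ i = 0" for i
    proof -
      have "\<bar>p $ i\<bar> \<le> (\<Sum>i\<in>UNIV. \<bar>p $ i\<bar>)"
        by (rule member_le_sum) auto
      then have "\<bar>p $ i\<bar> < 1"
        using qp_le \<open>q = 0\<close> \<open>s < 1\<close> by simp
      moreover obtain z where "p $ i = of_int z"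
        using p_int by (meson Ints_cases)
      ultimately show ?thesis
        by simp
    qed
    then have "p = 0"
      by (simp add: vec_eq_iff)
    with \<open>q = 0\<close> \<open>(q, p) \<noteq> 0\<close> show False
      by (simp add: zero_prod_def)
  qed
  define qz where "qz = (\<chi> j. \<lfloor>q $ j\<rfloor>)"
  define pz where "pz = (\<chi> i. \<lfloor>p $ i\<rfloor>)"
  have q_eq: "(\<chi> j. of_int (qz $ j)) = q" and p_eq: "(\<chi> i. of_int (pz $ i)) = p"
    using q_int p_int by (auto simp: vec_eq_iff qz_def pz_def elim!: Ints_cases)
  have "qz \<noteq> 0"
  proof
    assume "qz = 0"
    then have "q = 0"
      using q_eq by (simp add: vec_eq_iff)
    with \<open>q \<noteq> 0\<close> show False ..
  qed
  moreover have "(\<Sum>j\<in>UNIV. \<bar>of_int (qz $ j)\<bar>) \<le> r"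
    using q_le q_eq by (simp add: vec_eq_iff)
  moreover have "(\<Sum>i\<in>UNIV. \<bar>(Y *v (\<chi> j. of_int (qz $ j))) $ i - of_int (pz $ i)\<bar>) \<le> s"
    using qp_le p_eq by (simp add: q_eq vec_eq_iff)
  ultimately show ?thesis
    by blast
qed

lemma Pi_plus_le_mean_power:
  fixes x :: "real^'n"
  shows "Pi_plus x \<le> (1 + (\<Sum>j\<in>UNIV. \<bar>x $ j\<bar>) / CARD('n)) ^ CARD('n)"
proof -
  have "Pi_plus x \<le> ((\<Sum>j\<in>UNIV. max 1 \<bar>x $ j\<bar>) / CARD('n)) ^ CARD('n)"
    unfolding Pi_plus_def by (rule prod_le_mean_power) auto
  also have "\<dots> \<le> ((\<Sum>j\<in>UNIV. 1 + \<bar>x $ j\<bar>) / CARD('n)) ^ CARD('n)"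
    by (intro power_mono divide_right_mono sum_mono) (auto intro!: divide_nonneg_nonneg sum_nonneg)
  also have "\<dots> = (1 + (\<Sum>j\<in>UNIV. \<bar>x $ j\<bar>) / CARD('n)) ^ CARD('n)"
    by (simp add: sum.distrib add_divide_distrib)
  finally show ?thesis .
qed

lemma mem_S_mult_if_l1_bounds:
  fixes Y :: "real^'n::finite^'m::finite" and q :: "int^'n" and p :: "int^'m"
  assumes "q \<noteq> 0"
    and "(1 + (\<Sum>j\<in>UNIV. \<bar>of_int (q $ j)\<bar>) / CARD('n)) ^ CARD('n) < T"
    and "((\<Sum>i\<in>UNIV. \<bar>(Y *v (\<chi> j. of_int (q $ j))) $ i - of_int (p $ i)\<bar>) / CARD('m)) ^ CARD('m)
      < c * psi1 T"
  shows "Y \<in> S_mult (\<lambda>x. c * psi1 x) T"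
proof -
  have "(\<Prod>i\<in>UNIV. \<bar>(Y *v (\<chi> j. of_int (q $ j))) $ i - of_int (p $ i)\<bar>) < c * psi1 T"
    using prod_le_mean_power[of UNIV "\<lambda>i. \<bar>(Y *v (\<chi> j. of_int (q $ j))) $ i - of_int (p $ i)\<bar>"]
      assms(3) by simp
  moreover have "Pi_plus (\<chi> j. of_int (q $ j)) < T"
    using Pi_plus_le_mean_power[of "\<chi> j. of_int (q $ j)"] assms(2) by simp
  ultimately show ?thesis
    unfolding S_mult_def using \<open>q \<noteq> 0\<close> by (auto simp: matrix_vector_mult_def)
qed

lemma S_mult_eq_UNIV_if_radii:
  fixes r s T :: real
  assumes "r \<ge> 0" "s \<ge> 0" "s < 1" "fact CARD('n) * fact CARD('m) < r ^ CARD('n) * s ^ CARD('m)"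
    and "(1 + r / CARD('n)) ^ CARD('n) < T" "(s / CARD('m)) ^ CARD('m) < c * psi1 T"
  shows "(S_mult (\<lambda>x. c * psi1 x) T :: (real^'n::finite^'m::finite) set) = UNIV"
proof -
  have "Y \<in> S_mult (\<lambda>x. c * psi1 x) T" for Y :: "real^'n^'m"
  proof -
    obtain q p where "q \<noteq> 0" and q_le: "(\<Sum>j\<in>UNIV. \<bar>of_int (q $ j)\<bar>) \<le> r"
      and qp_le: "(\<Sum>i\<in>UNIV. \<bar>(Y *v (\<chi> j. of_int (q $ j))) $ i - of_int (p $ i)\<bar>) \<le> s"
      using exists_integer_l1_approximation[OF assms(1-4)] by blast
    have "(1 + (\<Sum>j\<in>UNIV. \<bar>of_int (q $ j)\<bar>) / CARD('n)) ^ CARD('n) \<le> (1 + r / CARD('n)) ^ CARD('n)"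
      using q_le by (intro power_mono add_left_mono divide_right_mono) (auto intro: sum_nonneg)
    moreover have "((\<Sum>i\<in>UNIV. \<bar>(Y *v (\<chi> j. of_int (q $ j))) $ i - of_int (p $ i)\<bar>) / CARD('m)) ^ CARD('m)
        \<le> (s / CARD('m)) ^ CARD('m)"
      using qp_le by (intro power_mono divide_right_mono) (auto intro: sum_nonneg)
    ultimately show ?thesis
      using assms(5,6) \<open>q \<noteq> 0\<close> by (intro mem_S_mult_if_l1_bounds[where p = p]) auto
  qed
  then show ?thesis
    by blast
qed

lemma exists_radii:
  fixes \<rho> \<gamma> T :: real and m n :: nat
  assumes "m > 0" "n > 0" "0 < \<gamma>" "\<gamma> < 1" "0 < \<rho>"
    and T: "\<rho> * real m ^ m < T" "(1 / (1 - \<gamma>)) ^ n < T"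
  shows "\<exists>r s. 0 \<le> r \<and> 0 \<le> s \<and> s < 1 \<and> r ^ n * s ^ m = real m ^ m * real n ^ n * \<gamma> ^ n * \<rho> \<and>
    (1 + r / n) ^ n < T \<and> (s / m) ^ m = \<rho> / T"
proof -
  have "0 < \<rho> * real m ^ m"
    using \<open>m > 0\<close> \<open>0 < \<rho>\<close> by simp
  then have "T > 0"
    using T(1) by linarith
  define t where "t = root n T"
  define a where "a = root m (\<rho> / T)"
  have t_pow: "t ^ n = T" and a_pow: "a ^ m = \<rho> / T" and "t > 0" "a > 0"
    using assms \<open>T > 0\<close> by (simp_all add: t_def a_def real_root_pow_pos2)
  have "1 / (1 - \<gamma>) < t"
    using T(2) \<open>n > 0\<close> \<open>t > 0\<close> t_pow by (metis less_eq_real_def power_less_imp_less_base)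
  then have "(1 + \<gamma> * t) ^ n < t ^ n"
    using assms \<open>t > 0\<close> by (intro power_strict_mono) (simp_all add: field_simps)
  then have "(1 + real n * (\<gamma> * t) / n) ^ n < T"
    using \<open>n > 0\<close> t_pow by simp
  moreover have "(real m * a) ^ m < 1 ^ m"
    using T(1) \<open>T > 0\<close> by (simp add: power_mult_distrib a_pow mult.commute)
  then have "real m * a < 1"
    by (rule power_less_imp_less_base) simp
  moreover have "(real n * (\<gamma> * t)) ^ n * (real m * a) ^ m = real m ^ m * real n ^ n * \<gamma> ^ n * \<rho>"
    using \<open>T > 0\<close> by (simp add: power_mult_distrib t_pow a_pow)
  moreover have "(real m * a / m) ^ m = \<rho> / T"
    using \<open>m > 0\<close> a_pow by simp
  ultimately show ?thesis
    using \<open>0 < \<gamma>\<close> \<open>t > 0\<close> \<open>a > 0\<close> by (intro exI[of _ "real n * (\<gamma> * t)"] exI[of _ "real m * a"]) auto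
qed

lemma S_mult_eq_UNIV_if_large:
  fixes c \<rho> \<gamma> T :: real
  assumes "0 < \<gamma>" "\<gamma> < 1" "0 < \<rho>" "\<rho> < c"
    and vol: "fact CARD('m) * fact CARD('n)
      < real CARD('m) ^ CARD('m) * real CARD('n) ^ CARD('n) * \<gamma> ^ CARD('n) * \<rho>"
    and T: "\<rho> * real CARD('m) ^ CARD('m) < T" "(1 / (1 - \<gamma>)) ^ CARD('n) < T"
  shows "(S_mult (\<lambda>x. c * psi1 x) T :: (real^'n::finite^'m::finite) set) = UNIV"
proof -
  obtain r s where "0 \<le> r" "0 \<le> s" "s < 1" "(1 + r / CARD('n)) ^ CARD('n) < T"
    and rs: "r ^ CARD('n) * s ^ CARD('m)
        = real CARD('m) ^ CARD('m) * real CARD('n) ^ CARD('n) * \<gamma> ^ CARD('n) * \<rho>"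
      "(s / CARD('m)) ^ CARD('m) = \<rho> / T"
    using exists_radii[of "CARD('m)" "CARD('n)" \<gamma> \<rho> T] assms by auto
  have "fact CARD('n) * fact CARD('m) < r ^ CARD('n) * s ^ CARD('m)"
    using vol unfolding rs(1) by (simp add: mult.commute)
  moreover have "0 < \<rho> * real CARD('m) ^ CARD('m)"
    using \<open>0 < \<rho>\<close> by simp
  then have "(s / CARD('m)) ^ CARD('m) < c * psi1 T"
    using \<open>\<rho> < c\<close> T(1) unfolding rs(2) by (simp add: psi1_def divide_strict_right_mono)
  ultimately show ?thesis
    using \<open>0 \<le> r\<close> \<open>0 \<le> s\<close> \<open>s < 1\<close> \<open>(1 + r / CARD('n)) ^ CARD('n) < T\<close>
    by (intro S_mult_eq_UNIV_if_radii)
qed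

lemma exists_slack_parameters:
  fixes K c :: real and n :: nat
  assumes "0 < K" "K < c" "n > 0"
  shows "\<exists>\<rho> \<gamma>. 0 < \<gamma> \<and> \<gamma> < 1 \<and> 0 < \<rho> \<and> \<rho> < c \<and> K < \<gamma> ^ n * \<rho>"
proof -
  define \<rho> where "\<rho> = (K + c) / 2"
  define \<gamma> where "\<gamma> = root n ((1 + K / \<rho>) / 2)"
  have "K < \<rho>" "\<rho> < c"
    using assms by (simp_all add: \<rho>_def)
  then have "0 < (1 + K / \<rho>) / 2" "(1 + K / \<rho>) / 2 < 1"
    using \<open>0 < K\<close> by (simp_all add: field_simps)
  then have \<gamma>_pow: "\<gamma> ^ n = (1 + K / \<rho>) / 2" and "0 < \<gamma>" "\<gamma> < 1"
    using \<open>n > 0\<close> by (simp_all add: \<gamma>_def real_root_pow_pos2)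
  have "K < \<gamma> ^ n * \<rho>"
    using \<open>K < \<rho>\<close> \<open>0 < K\<close> unfolding \<gamma>_pow by (simp add: field_simps)
  then show ?thesis
    using \<open>0 < \<gamma>\<close> \<open>\<gamma> < 1\<close> \<open>K < \<rho>\<close> \<open>\<rho> < c\<close> \<open>0 < K\<close> by (intro exI[of _ \<rho>] exI[of _ \<gamma>]) simp
qed

theorem mainTheorem3:
  fixes c :: real
  assumes "c > fact CARD('m) * fact CARD('n) / (real CARD('m) ^ CARD('m) * real CARD('n) ^ CARD('n))"
  shows "(D_mult (\<lambda>x. c * psi1 x) :: (real^'n::finite^'m::finite) set) = UNIV"
proof -
  define M where "M = CARD('m)"
  define N where "N = CARD('n)"
  define K where "K = fact M * fact N / (real M ^ M * real N ^ N)"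
  have "M > 0" "N > 0"
    by (simp_all add: M_def N_def)
  have "0 < K" "K < c"
    using assms by (simp_all add: K_def M_def N_def)
  then obtain \<rho> \<gamma> where "0 < \<gamma>" "\<gamma> < 1" "0 < \<rho>" "\<rho> < c" and "K < \<gamma> ^ N * \<rho>"
    using exists_slack_parameters \<open>N > 0\<close> by blast
  then have vol: "fact M * fact N < real M ^ M * real N ^ N * \<gamma> ^ N * \<rho>"
    using \<open>M > 0\<close> \<open>N > 0\<close> by (simp add: K_def field_simps)
  define T0 where "T0 = 1 + \<rho> * real M ^ M + (1 / (1 - \<gamma>)) ^ N"
  have "0 < \<rho> * real M ^ M" "0 < (1 / (1 - \<gamma>)) ^ N"
    using \<open>M > 0\<close> \<open>\<gamma> < 1\<close> \<open>0 < \<rho>\<close> by simp_all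
  then have "\<rho> * real M ^ M < T" "(1 / (1 - \<gamma>)) ^ N < T" if "T \<ge> T0" for T
    using that by (simp_all add: T0_def)
  then have "S_mult (\<lambda>x. c * psi1 x) T = (UNIV :: (real^'n^'m) set)" if "T \<ge> T0" for T
    using S_mult_eq_UNIV_if_large \<open>0 < \<gamma>\<close> \<open>\<gamma> < 1\<close> \<open>0 < \<rho>\<close> \<open>\<rho> < c\<close> vol that
    unfolding M_def N_def by blast
  moreover have "T0 > 1"
    using \<open>0 < \<rho> * real M ^ M\<close> \<open>0 < (1 / (1 - \<gamma>)) ^ N\<close> by (simp add: T0_def)
  ultimately show ?thesis
    unfolding D_mult_def by auto
qed

end
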